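(* Fix $\epsilon>0$ and $\alpha\in(1,\infty)$. For each prior $\rho$ and pair $(s_i,s_j)\in\mathbb{S}$, let $\pi^*_{i,j,\rho}$ be the comonotone coupling of $P_{X|s_i,\rho}$ and $P_{X|s_j,\rho}$ and suppose $\sigma^2_{i,j,\rho}>0$ satisfies $$\int e^{\alpha(\alpha-1)\frac{(x-x')^2}{2\sigma^2_{i,j,\rho}}}\,\mathrm{d}\pi^*_{i,j,\rho}(x,x')=e^{(\alpha-1)\epsilon}.$$ Let $\sigma^2$ be the maximum of $\sigma^2_{i,j,\rho}$ over all $(s_i,s_j)\in\mathbb{S}$ and all $\rho$ (assumed to exist). Then releasing $Y=X+N$ with $N$ Gaussian of mean $0$ and variance $\sigma^2$ (density $\frac{1}{\sqrt{2\pi}\sigma}e^{-z^2/(2\sigma^2)}$), independent of $(X,S)$, attains $(\alpha,\epsilon)$-Rényi pufferfish privacy.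
   Context: Setting: a sensitive secret $S$ and real-valued data $X$. For each secret value $s$ and each adversarial prior belief $\rho$ (ranging over a given set of priors), $X$ given $S=s$ has a density $P_{X|s,\rho}$ on $\mathbb{R}$. $\mathbb{S}$ is a given set of ordered secret pairs. The released data is $Y=X+N$ with $N$ independent of $(X,S)$, so $P_{Y|S}(y|s,\rho)=\int P_N(y-x)P_{X|S}(x|s,\rho)\,\mathrm{d}x$. For densities $P\ll Q$, $D_\alpha(P\|Q)=\frac{1}{\alpha-1}\log\int P^\alpha Q^{1-\alpha}$. $Y$ satisfies $(\alpha,\epsilon)$-Rényi pufferfish privacy if $D_\alpha(P_{Y|s_i,\rho}\|P_{Y|s_j,\rho})\le\epsilon$ for all $\rho$ and all $(s_i,s_j)\in\mathbb{S}$. The comonotone (Kantorovich optimal) coupling of two distributions on $\mathbb{R}$ with CDFs $F_i,F_j$ is the joint distribution with joint CDF $\min\{F_i(x),F_j(x')\}$, i.e. the law of $(F_i^{-1}(U),F_j^{-1}(U))$, $U\sim\mathrm{Unif}(0,1)$. *)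

theory Defs
  imports "HOL-Probability.Probability"
begin

definition is_density :: "(real \<Rightarrow> real) \<Rightarrow> bool" where
  "is_density f \<longleftrightarrow> f \<in> borel_measurable lborel \<and> (\<forall>x. 0 \<le> f x)
     \<and> (\<integral>\<^sup>+ x. ennreal (f x) \<partial>lborel) = 1"

definition cdf_of :: "(real \<Rightarrow> real) \<Rightarrow> real \<Rightarrow> real" where
  "cdf_of f x = (LINT t:{..x}|lborel. f t)"

definition quantile_of :: "(real \<Rightarrow> real) \<Rightarrow> real \<Rightarrow> real" where
  "quantile_of f u = Inf {x. u \<le> cdf_of f x}"

definition comonotone_coupling :: "(real \<Rightarrow> real) \<Rightarrow> (real \<Rightarrow> real) \<Rightarrow> (real \<times> real) measure" where
  "comonotone_coupling fi fj =
     distr (uniform_measure lborel {0<..<1::real}) borel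
       (\<lambda>u. (quantile_of fi u, quantile_of fj u))"

definition renyi_div :: "real \<Rightarrow> (real \<Rightarrow> real) \<Rightarrow> (real \<Rightarrow> real) \<Rightarrow> ereal" where
  "renyi_div \<alpha> p q =
     (let I = (\<integral>\<^sup>+ x. ennreal (p x powr \<alpha> * q x powr (1 - \<alpha>)) \<partial>lborel)
      in if I = \<infinity> then \<infinity> else ereal (ln (enn2real I) / (\<alpha> - 1)))"

text \<open>Density of Y = X + N, where X has density f and N has density fN, independent.\<close>
definition conv_density :: "(real \<Rightarrow> real) \<Rightarrow> (real \<Rightarrow> real) \<Rightarrow> real \<Rightarrow> real" where
  "conv_density fN f y = (\<integral> x. fN (y - x) * f x \<partial>lborel)"

definition renyi_pufferfish :: "real \<Rightarrow> real \<Rightarrow> 'p set \<Rightarrow> ('s \<times> 's) set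
    \<Rightarrow> ('s \<Rightarrow> 'p \<Rightarrow> real \<Rightarrow> real) \<Rightarrow> (real \<Rightarrow> real) \<Rightarrow> bool" where
  "renyi_pufferfish \<alpha> \<epsilon> Priors SS PX fN \<longleftrightarrow>
     (\<forall>\<rho>\<in>Priors. \<forall>(si, sj)\<in>SS.
        renyi_div \<alpha> (conv_density fN (PX si \<rho>)) (conv_density fN (PX sj \<rho>)) \<le> ereal \<epsilon>)"

end

theory Submission
  imports Defs
begin

(* Under the comonotone coupling both released densities are mixtures, over u uniform on (0,1),
   of Gaussians centred at the quantiles F_i^{-1}(u) and F_j^{-1}(u).  The map
   (a, b) \<mapsto> a^\<alpha> b^(1-\<alpha>) is jointly convex, so the Renyi integral of the two mixtures is
   at most the average over u of the Renyi integrals of the Gaussian pairs; for a common variance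
   \<sigma>^2 and means x, x' that integral is exp (\<alpha> (\<alpha>-1) (x-x')^2 / (2 \<sigma>^2)).  The resulting
   coupling integral decreases in \<sigma>^2, so the largest calibrated variance serves every pair. *)

lemma real_distribution_density_lborel:
  assumes "is_density f"
  shows "real_distribution (density lborel f)"
proof -
  have "prob_space (density lborel f)"
    using assms by (intro prob_spaceI) (simp add: is_density_def emeasure_density)
  then show ?thesis
    by (simp add: real_distribution_def real_distribution_axioms_def)
qed

lemma cdf_density_lborel:
  assumes "is_density f"
  shows "cdf (density lborel f) = cdf_of f"
proof
  fix x
  have [measurable]: "f \<in> borel_measurable borel" and nonneg: "\<And>x. 0 \<le> f x"
    using assms by (auto simp: is_density_def)
  have "cdf (density lborel f) x = enn2real (\<integral>\<^sup>+ t. ennreal (indicator {..x} t *\<^sub>R f t) \<partial>lborel)"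
    by (auto simp: cdf_def measure_def emeasure_density intro!: arg_cong[where f=enn2real] nn_integral_cong
        split: split_indicator)
  also have "\<dots> = cdf_of f x"
    unfolding cdf_of_def set_lebesgue_integral_def
    by (rule integral_eq_nn_integral[symmetric]) (auto simp: nonneg)
  finally show "cdf (density lborel f) x = cdf_of f x" .
qed

lemma quantile_of_eq_pseudoinverse:
  assumes "is_density f"
  shows "quantile_of f = (\<lambda>u. Inf {x. u \<le> cdf (density lborel f) x})"
  unfolding quantile_of_def cdf_density_lborel[OF assms] ..

lemma borel_measurable_quantile_of:
  assumes "is_density f"
  shows "quantile_of f \<in> borel_measurable borel"
proof -
  interpret cdf_distribution "density lborel f"
    using real_distribution_density_lborel[OF assms] by (simp add: cdf_distribution_def)
  have const: "quantile_of f \<in> borel_measurable (restrict_space borel A)"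
    if "\<And>u. u \<in> A \<Longrightarrow> quantile_of f u = c" for A c
    using that by (subst measurable_cong[where g="\<lambda>_. c"]) (auto simp: space_restrict_space)
  show ?thesis
    \<comment> \<open>the pseudoinverse is monotone on (0,1) and constant on each of the other pieces\<close>
  proof (rule measurable_piecewise_restrict[of "{{..0}, {0<..<1}, {1}, {1<..}}"])
    fix A :: "real set" assume "A \<in> {{..0}, {0<..<1}, {1}, {1<..}}"
    moreover have "quantile_of f u = Inf UNIV" if "u \<le> 0" for u
    proof -
      have "{x. u \<le> C x} = UNIV"
        using that cdf_nonneg order_trans by blast
      then show ?thesis by (simp add: quantile_of_eq_pseudoinverse[OF assms])
    qed
    moreover have "quantile_of f u = Inf {}" if "1 < u" for u
    proof -
      have "{x. u \<le> C x} = {}"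
        using that cdf_bounded_prob by (auto simp: not_le intro: le_less_trans)
      then show ?thesis by (simp add: quantile_of_eq_pseudoinverse[OF assms])
    qed
    ultimately show "quantile_of f \<in> borel_measurable (restrict_space borel A)"
      using measurable_CI const by (auto simp: quantile_of_eq_pseudoinverse[OF assms])
  qed auto
qed

lemma distr_uniform_quantile_of:
  assumes "is_density f"
  shows "distr (uniform_measure lborel {0<..<1}) borel (quantile_of f) = density lborel f"
proof -
  interpret cdf_distribution "density lborel f"
    using real_distribution_density_lborel[OF assms] by (simp add: cdf_distribution_def)
  have [measurable]: "quantile_of f \<in> borel_measurable borel"
    by (rule borel_measurable_quantile_of[OF assms])
  have "distr (uniform_measure lborel {0<..<1}) borel (quantile_of f)
      = distr (restrict_space lborel {0<..<1}) borel (\<lambda>u. Inf {x. u \<le> C x})" (is "?L = ?R")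
  proof (rule measure_eqI)
    fix A :: "real set" assume "A \<in> sets ?L"
    then have [measurable]: "A \<in> sets borel" by simp
    have "quantile_of f -` A \<in> sets lborel"
      using measurable_sets_borel[of "quantile_of f" borel A] by simp
    then have "emeasure ?L A = emeasure lborel (quantile_of f -` A \<inter> {0<..<1})"
      by (subst emeasure_distr) (simp_all add: Int_commute divide_ennreal_def cong: measurable_cong_sets)
    also have "\<dots> = emeasure ?R A"
      using measurable_CI
      by (simp add: emeasure_distr emeasure_restrict_space space_restrict_space
          quantile_of_eq_pseudoinverse[OF assms] Int_commute cong: measurable_cong_sets)
    finally show "emeasure ?L A = emeasure ?R A" .
  qed simp
  also have "\<dots> = density lborel f"
    by (rule distr_I_eq_M)
  finally show ?thesis .
qed

lemma conv_density_eq_quantile_mixture: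
  assumes "is_density f" and [measurable]: "g \<in> borel_measurable borel"
    and g_nonneg: "\<And>z. 0 \<le> g z" and g_le: "\<And>z. g z \<le> c"
  shows "ennreal (conv_density g f y) = (\<integral>\<^sup>+ u. g (y - quantile_of f u) \<partial>uniform_measure lborel {0<..<1})"
proof -
  have [measurable]: "f \<in> borel_measurable borel" and f_nonneg: "\<And>x. 0 \<le> f x"
    and f_total: "(\<integral>\<^sup>+ x. f x \<partial>lborel) = 1"
    using assms(1) by (auto simp: is_density_def)
  have [measurable]: "quantile_of f \<in> borel_measurable borel"
    by (rule borel_measurable_quantile_of[OF assms(1)])
  have "(\<integral>\<^sup>+ u. g (y - quantile_of f u) \<partial>uniform_measure lborel {0<..<1})
      = (\<integral>\<^sup>+ x. g (y - x) \<partial>distr (uniform_measure lborel {0<..<1}) borel (quantile_of f))"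
    by (subst nn_integral_distr) (simp_all cong: measurable_cong_sets)
  also have "\<dots> = (\<integral>\<^sup>+ x. ennreal (g (y - x) * f x) \<partial>lborel)"
    using g_nonneg f_nonneg
    by (simp add: distr_uniform_quantile_of[OF assms(1)] nn_integral_density ennreal_mult' mult.commute)
  finally have mixture: "(\<integral>\<^sup>+ u. g (y - quantile_of f u) \<partial>uniform_measure lborel {0<..<1})
      = (\<integral>\<^sup>+ x. ennreal (g (y - x) * f x) \<partial>lborel)" .
  have "(\<integral>\<^sup>+ x. ennreal (g (y - x) * f x) \<partial>lborel) \<le> (\<integral>\<^sup>+ x. c * ennreal (f x) \<partial>lborel)"
    using g_le f_nonneg g_nonneg
    by (intro nn_integral_mono) (metis ennreal_leI ennreal_mult' mult_right_mono order.trans)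
  also have "\<dots> < \<infinity>"
    by (simp add: nn_integral_cmult f_total)
  finally have "integrable lborel (\<lambda>x. g (y - x) * f x)"
    using g_nonneg f_nonneg by (intro integrableI_nonneg) auto
  then show ?thesis
    using g_nonneg f_nonneg
    by (simp add: conv_density_def mixture nn_integral_eq_integral)
qed

lemma powr_tangent_le:
  fixes \<alpha> r t :: real
  assumes "\<alpha> > 1" "t \<ge> 0" "r \<ge> 0"
  shows "\<alpha> * r powr (\<alpha> - 1) * t \<le> t powr \<alpha> + (\<alpha> - 1) * r powr \<alpha>"
proof -
  let ?q = "\<alpha> / (\<alpha> - 1)"
  have q: "?q > 1" "1 / \<alpha> + 1 / ?q = 1"
    using assms by (auto simp: field_simps)
  have "t * r powr (\<alpha> - 1) \<le> t powr \<alpha> / \<alpha> + (r powr (\<alpha> - 1)) powr ?q / ?q"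
    by (rule Youngs_inequality) (use assms q in auto)
  also have "(r powr (\<alpha> - 1)) powr ?q = r powr \<alpha>"
    using assms by (simp add: powr_powr)
  finally have "t * r powr (\<alpha> - 1) \<le> t powr \<alpha> / \<alpha> + r powr \<alpha> / ?q" .
  then show ?thesis
    using assms by (simp add: field_simps)
qed

lemma perspective_powr_tangent_le:
  fixes \<alpha> a b r :: real
  assumes "\<alpha> > 1" "a \<ge> 0" "b > 0" "r \<ge> 0"
  shows "\<alpha> * r powr (\<alpha> - 1) * a \<le> a powr \<alpha> * b powr (1 - \<alpha>) + (\<alpha> - 1) * r powr \<alpha> * b"
proof -
  have "b * (\<alpha> * r powr (\<alpha> - 1) * (a / b)) \<le> b * ((a / b) powr \<alpha> + (\<alpha> - 1) * r powr \<alpha>)"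
    using assms powr_tangent_le[of \<alpha> "a / b" r] by (intro mult_left_mono) auto
  moreover have "b * (a / b) powr \<alpha> = a powr \<alpha> * b powr (1 - \<alpha>)"
    using assms by (simp add: powr_divide powr_diff field_simps)
  ultimately show ?thesis
    using assms by (simp add: field_simps)
qed

lemma nn_integral_powr_mixture_ge:
  fixes \<alpha> A B :: real and a b :: "'a \<Rightarrow> real"
  assumes "\<alpha> > 1"
    and [measurable]: "a \<in> borel_measurable M" "b \<in> borel_measurable M"
    and a_nonneg: "\<And>u. 0 \<le> a u" and b_pos: "\<And>u. 0 < b u"
    and A: "(\<integral>\<^sup>+ u. a u \<partial>M) = ennreal A" "0 \<le> A"
    and B: "(\<integral>\<^sup>+ u. b u \<partial>M) = ennreal B" "0 \<le> B"
  shows "ennreal (A powr \<alpha> * B powr (1 - \<alpha>)) \<le> (\<integral>\<^sup>+ u. ennreal (a u powr \<alpha> * b u powr (1 - \<alpha>)) \<partial>M)"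
proof (cases "A = 0 \<or> B = 0")
  case False
  \<comment> \<open>integrate the supporting hyperplane of (a, b) \<mapsto> a powr \<alpha> * b powr (1 - \<alpha>) at (A, B)\<close>
  define r where "r = A / B"
  define K where "K = A powr \<alpha> * B powr (1 - \<alpha>)"
  have r: "r > 0" and K: "K \<ge> 0"
    using False A B by (auto simp: r_def K_def)
  have "\<alpha> * r powr (\<alpha> - 1) * A = \<alpha> * K" and "(\<alpha> - 1) * r powr \<alpha> * B = (\<alpha> - 1) * K"
    using False A B unfolding r_def K_def
    by (simp_all add: powr_divide powr_diff powr_minus_divide field_simps)
  then have "ennreal ((\<alpha> - 1) * K) + ennreal K = ennreal ((\<alpha> - 1) * K + K)"
    using \<open>\<alpha> > 1\<close> K by (simp add: ennreal_plus)
  also have "(\<alpha> - 1) * K + K = \<alpha> * r powr (\<alpha> - 1) * A"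
    using \<open>\<alpha> * r powr (\<alpha> - 1) * A = \<alpha> * K\<close> by argo
  also have "ennreal \<dots> = ennreal (\<alpha> * r powr (\<alpha> - 1)) * (\<integral>\<^sup>+ u. a u \<partial>M)"
    using \<open>\<alpha> > 1\<close> A by (simp add: ennreal_mult)
  also have "\<dots> = (\<integral>\<^sup>+ u. ennreal (\<alpha> * r powr (\<alpha> - 1) * a u) \<partial>M)"
    using \<open>\<alpha> > 1\<close> a_nonneg
    by (subst nn_integral_cmult[symmetric]) (auto intro!: nn_integral_cong simp: ennreal_mult)
  also have "\<dots> \<le> (\<integral>\<^sup>+ u. ennreal ((\<alpha> - 1) * r powr \<alpha>) * b u + ennreal (a u powr \<alpha> * b u powr (1 - \<alpha>)) \<partial>M)"
  proof (rule nn_integral_mono)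
    fix u
    have "\<alpha> * r powr (\<alpha> - 1) * a u \<le> (\<alpha> - 1) * r powr \<alpha> * b u + a u powr \<alpha> * b u powr (1 - \<alpha>)"
      using perspective_powr_tangent_le[of \<alpha> "a u" "b u" r] \<open>\<alpha> > 1\<close> a_nonneg b_pos r by simp
    moreover have "ennreal ((\<alpha> - 1) * r powr \<alpha>) * b u + ennreal (a u powr \<alpha> * b u powr (1 - \<alpha>))
        = ennreal ((\<alpha> - 1) * r powr \<alpha> * b u + a u powr \<alpha> * b u powr (1 - \<alpha>))"
      using \<open>\<alpha> > 1\<close> b_pos[of u] by (simp add: ennreal_mult ennreal_plus)
    ultimately show "ennreal (\<alpha> * r powr (\<alpha> - 1) * a u)
        \<le> ennreal ((\<alpha> - 1) * r powr \<alpha>) * b u + ennreal (a u powr \<alpha> * b u powr (1 - \<alpha>))"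
      by (simp add: ennreal_leI)
  qed
  also have "\<dots> = ennreal ((\<alpha> - 1) * r powr \<alpha>) * ennreal B
      + (\<integral>\<^sup>+ u. ennreal (a u powr \<alpha> * b u powr (1 - \<alpha>)) \<partial>M)"
    by (simp add: nn_integral_add nn_integral_cmult B)
  also have "ennreal ((\<alpha> - 1) * r powr \<alpha>) * ennreal B = ennreal ((\<alpha> - 1) * K)"
    using \<open>(\<alpha> - 1) * r powr \<alpha> * B = (\<alpha> - 1) * K\<close> \<open>\<alpha> > 1\<close> B
    by (subst ennreal_mult[symmetric]) auto
  finally show ?thesis
    unfolding K_def by (simp add: ennreal_add_left_cancel_le)
qed auto

lemma normal_density_le: "normal_density \<mu> \<sigma> x \<le> 1 / sqrt (2 * pi * \<sigma>\<^sup>2)"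
  unfolding normal_density_def by (rule mult_left_le) auto

lemma normal_density_powr_mult:
  fixes s \<alpha> x x' y :: real
  assumes s: "s > 0"
  shows "normal_density 0 (sqrt s) (y - x) powr \<alpha> * normal_density 0 (sqrt s) (y - x') powr (1 - \<alpha>)
    = exp (\<alpha> * (\<alpha> - 1) * (x - x')\<^sup>2 / (2 * s)) * normal_density (\<alpha> * x + (1 - \<alpha>) * x') (sqrt s) y"
proof -
  define c where "c = 1 / sqrt (2 * pi * s)"
  have c: "c > 0"
    using s by (simp add: c_def)
  have N: "normal_density m (sqrt s) z = c * exp (- (z - m)\<^sup>2 / (2 * s))" for m z
    using s by (simp add: normal_density_def c_def)
  have "- (y - x)\<^sup>2 / (2 * s) * \<alpha> + - (y - x')\<^sup>2 / (2 * s) * (1 - \<alpha>)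
      = \<alpha> * (\<alpha> - 1) * (x - x')\<^sup>2 / (2 * s) + - (y - (\<alpha> * x + (1 - \<alpha>) * x'))\<^sup>2 / (2 * s)"
    using s by (simp add: field_simps power2_eq_square)
  then show ?thesis
    using c by (simp add: N powr_mult exp_powr_real mult_exp_exp powr_add[symmetric] mult_ac)
qed

lemma nn_integral_normal_density_powr_mult:
  fixes s \<alpha> x x' :: real
  assumes "s > 0"
  shows "(\<integral>\<^sup>+ y. ennreal (normal_density 0 (sqrt s) (y - x) powr \<alpha> * normal_density 0 (sqrt s) (y - x') powr (1 - \<alpha>)) \<partial>lborel)
    = ennreal (exp (\<alpha> * (\<alpha> - 1) * (x - x')\<^sup>2 / (2 * s)))"
  using assms
  by (simp add: normal_density_powr_mult ennreal_mult nn_integral_cmult nn_integral_eq_integral)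

lemma nn_integral_comonotone_coupling:
  assumes "is_density f1" "is_density f2" and [measurable]: "g \<in> borel_measurable borel"
  shows "(\<integral>\<^sup>+ z. g z \<partial>comonotone_coupling f1 f2)
    = (\<integral>\<^sup>+ u. g (quantile_of f1 u, quantile_of f2 u) \<partial>uniform_measure lborel {0<..<1})"
proof -
  have [measurable]: "quantile_of f1 \<in> borel_measurable borel" "quantile_of f2 \<in> borel_measurable borel"
    using assms(1,2) by (simp_all add: borel_measurable_quantile_of)
  show ?thesis
    unfolding comonotone_coupling_def
    by (subst nn_integral_distr) (simp_all cong: measurable_cong_sets)
qed

lemma nn_integral_powr_gaussian_conv_le:
  fixes \<alpha> s :: real
  assumes "\<alpha> > 1" "s > 0" and dens: "is_density f1" "is_density f2"
  defines "N \<equiv> normal_density 0 (sqrt s)"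
  shows "(\<integral>\<^sup>+ y. ennreal (conv_density N f1 y powr \<alpha> * conv_density N f2 y powr (1 - \<alpha>)) \<partial>lborel)
    \<le> (\<integral>\<^sup>+ z. ennreal (exp (\<alpha> * (\<alpha> - 1) * (fst z - snd z)\<^sup>2 / (2 * s))) \<partial>comonotone_coupling f1 f2)"
proof -
  let ?U = "uniform_measure lborel {0<..<1::real}"
  have [measurable]: "quantile_of f1 \<in> borel_measurable borel" "quantile_of f2 \<in> borel_measurable borel"
    using dens by (simp_all add: borel_measurable_quantile_of)
  interpret U: prob_space ?U
    by (rule prob_space_uniform_measure) auto
  interpret pair_sigma_finite ?U lborel ..
  have mixture: "ennreal (conv_density N f y) = (\<integral>\<^sup>+ u. N (y - quantile_of f u) \<partial>?U)"
    if "is_density f" for f y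
    using that unfolding N_def by (rule conv_density_eq_quantile_mixture) (auto intro: normal_density_le)
  have conv_nonneg: "0 \<le> conv_density N f y" if "is_density f" for f y
    using that unfolding conv_density_def is_density_def N_def
    by (simp add: Bochner_Integration.integral_nonneg)
  have "(\<integral>\<^sup>+ y. ennreal (conv_density N f1 y powr \<alpha> * conv_density N f2 y powr (1 - \<alpha>)) \<partial>lborel)
      \<le> (\<integral>\<^sup>+ y. \<integral>\<^sup>+ u. ennreal (N (y - quantile_of f1 u) powr \<alpha> * N (y - quantile_of f2 u) powr (1 - \<alpha>)) \<partial>?U \<partial>lborel)"
    using assms(1,2) dens mixture conv_nonneg
    unfolding N_def
    by (intro nn_integral_mono nn_integral_powr_mixture_ge)
      (auto simp: normal_density_pos cong: measurable_cong_sets)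
  also have "\<dots> = (\<integral>\<^sup>+ u. \<integral>\<^sup>+ y. ennreal (N (y - quantile_of f1 u) powr \<alpha> * N (y - quantile_of f2 u) powr (1 - \<alpha>)) \<partial>lborel \<partial>?U)"
    unfolding N_def by (rule Fubini') (simp cong: measurable_cong_sets)
  also have "\<dots> = (\<integral>\<^sup>+ u. ennreal (exp (\<alpha> * (\<alpha> - 1) * (quantile_of f1 u - quantile_of f2 u)\<^sup>2 / (2 * s))) \<partial>?U)"
    unfolding N_def using assms(2) by (simp add: nn_integral_normal_density_powr_mult)
  also have "\<dots> = (\<integral>\<^sup>+ z. ennreal (exp (\<alpha> * (\<alpha> - 1) * (fst z - snd z)\<^sup>2 / (2 * s))) \<partial>comonotone_coupling f1 f2)"
    by (subst nn_integral_comonotone_coupling[OF dens]) (simp_all add: borel_prod[symmetric])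
  finally show ?thesis .
qed

lemma renyi_div_le_of_nn_integral_le:
  fixes \<alpha> \<epsilon> :: real
  assumes "\<alpha> > 1" "0 \<le> \<epsilon>"
    and le: "(\<integral>\<^sup>+ x. ennreal (p x powr \<alpha> * q x powr (1 - \<alpha>)) \<partial>lborel) \<le> ennreal (exp ((\<alpha> - 1) * \<epsilon>))"
  shows "renyi_div \<alpha> p q \<le> ereal \<epsilon>"
proof -
  define I where "I = (\<integral>\<^sup>+ x. ennreal (p x powr \<alpha> * q x powr (1 - \<alpha>)) \<partial>lborel)"
  have "I \<noteq> \<infinity>"
    using le by (auto simp: I_def top_unique)
  moreover have "ln (enn2real I) \<le> (\<alpha> - 1) * \<epsilon>"
  proof (cases "enn2real I = 0")
    case False
    then have "0 < enn2real I"
      by (simp add: order_less_le)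
    moreover have "enn2real I \<le> exp ((\<alpha> - 1) * \<epsilon>)"
      using le by (simp add: I_def enn2real_leI)
    ultimately show ?thesis
      by (metis ln_exp ln_le_cancel_iff exp_gt_zero)
  qed (use assms in simp) \<comment> \<open>I = 0 gives the junk value ln 0 = 0\<close>
  ultimately show ?thesis
    using \<open>\<alpha> > 1\<close> by (simp add: renyi_div_def I_def[symmetric] divide_le_eq mult.commute)
qed

theorem theorem2:
  fixes \<alpha> \<epsilon> \<sigma>2 :: real
    and Priors :: "'p set" and SS :: "('s \<times> 's) set"
    and PX :: "'s \<Rightarrow> 'p \<Rightarrow> real \<Rightarrow> real"
    and v :: "'s \<Rightarrow> 's \<Rightarrow> 'p \<Rightarrow> real"
  assumes eps: "\<epsilon> > 0" and alpha: "\<alpha> > 1"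
    and dens: "\<And>s \<rho>. \<rho> \<in> Priors \<Longrightarrow> is_density (PX s \<rho>)"
    and v_pos: "\<And>si sj \<rho>. (si, sj) \<in> SS \<Longrightarrow> \<rho> \<in> Priors \<Longrightarrow> v si sj \<rho> > 0"
    and v_eq: "\<And>si sj \<rho>. (si, sj) \<in> SS \<Longrightarrow> \<rho> \<in> Priors \<Longrightarrow>
        (\<integral>\<^sup>+ z. ennreal (exp (\<alpha> * (\<alpha> - 1) * (fst z - snd z)\<^sup>2 / (2 * v si sj \<rho>)))
           \<partial>comonotone_coupling (PX si \<rho>) (PX sj \<rho>)) = ennreal (exp ((\<alpha> - 1) * \<epsilon>))"
    and max_attained: "\<exists>si sj \<rho>. (si, sj) \<in> SS \<and> \<rho> \<in> Priors \<and> \<sigma>2 = v si sj \<rho>"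
    and max_bound: "\<And>si sj \<rho>. (si, sj) \<in> SS \<Longrightarrow> \<rho> \<in> Priors \<Longrightarrow> v si sj \<rho> \<le> \<sigma>2"
  shows "renyi_pufferfish \<alpha> \<epsilon> Priors SS PX (normal_density 0 (sqrt \<sigma>2))"
  unfolding renyi_pufferfish_def
  \<comment> \<open>only the upper bound max_bound is used\<close>
proof (intro ballI, clarify)
  fix \<rho> si sj
  assume \<rho>: "\<rho> \<in> Priors" and pair: "(si, sj) \<in> SS"
  let ?coupling = "comonotone_coupling (PX si \<rho>) (PX sj \<rho>)"
  let ?N = "normal_density 0 (sqrt \<sigma>2)"
  have v: "0 < v si sj \<rho>" "v si sj \<rho> \<le> \<sigma>2"
    using v_pos[OF pair \<rho>] max_bound[OF pair \<rho>] .
  have "(\<integral>\<^sup>+ y. ennreal (conv_density ?N (PX si \<rho>) y powr \<alpha> * conv_density ?N (PX sj \<rho>) y powr (1 - \<alpha>)) \<partial>lborel)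
      \<le> (\<integral>\<^sup>+ z. ennreal (exp (\<alpha> * (\<alpha> - 1) * (fst z - snd z)\<^sup>2 / (2 * \<sigma>2))) \<partial>?coupling)"
    using v by (intro nn_integral_powr_gaussian_conv_le alpha dens \<rho>) simp
  also have "\<dots> \<le> (\<integral>\<^sup>+ z. ennreal (exp (\<alpha> * (\<alpha> - 1) * (fst z - snd z)\<^sup>2 / (2 * v si sj \<rho>))) \<partial>?coupling)"
    using alpha v by (intro nn_integral_mono ennreal_leI exp_mono frac_le) auto
  also have "\<dots> = ennreal (exp ((\<alpha> - 1) * \<epsilon>))"
    by (rule v_eq[OF pair \<rho>])
  finally show "renyi_div \<alpha> (conv_density ?N (PX si \<rho>)) (conv_density ?N (PX sj \<rho>)) \<le> ereal \<epsilon>"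
    using alpha eps by (intro renyi_div_le_of_nn_integral_le) auto
qed

end
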